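(* Let $C$ be a commutative ring, let $X,Y$ be disjoint sets with $|X|=|Y|=n$, and let $S_{2n}$ be the symmetric group on $X\cup Y$. For $Z\subseteq X$ put $P(Z)=\sum_{\sigma\in S_{2n},\ \sigma(Z)\subseteq Y}\operatorname{sgn}(\sigma)\,\sigma\in C[S_{2n}]$. Then $$\sum_{Z\subseteq X}(-1)^{|Z|}P(Z)=\sum_{\sigma\in S_{2n},\ \sigma(X)=X}\operatorname{sgn}(\sigma)\,\sigma.$$ *)

theory Defs
  imports "HOL-Combinatorics.Permutations"
begin

text \<open>An element of the group ring C[S_U] (U finite) is represented by its coefficient
  function, a map from permutations (functions 'a => 'a permuting U) to C.
  signed_sum A is the coefficient function of the element  sum over sigma in A of sgn(sigma) sigma.\<close>

definition signed_sum :: "('a \<Rightarrow> 'a) set \<Rightarrow> ('a \<Rightarrow> 'a) \<Rightarrow> 'c::comm_ring_1" where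
  "signed_sum A = (\<lambda>\<tau>. if \<tau> \<in> A then of_int (sign \<tau>) else 0)"

definition P_elt :: "'a set \<Rightarrow> 'a set \<Rightarrow> 'a set \<Rightarrow> ('a \<Rightarrow> 'a) \<Rightarrow> 'c::comm_ring_1" where
  "P_elt X Y Z = signed_sum {\<sigma>. \<sigma> permutes (X \<union> Y) \<and> \<sigma> ` Z \<subseteq> Y}"

end

theory Submission
  imports Defs
begin

text \<open>Fix a permutation \<tau> of X \<union> Y and let W be the set of x \<in> X with \<tau> x \<in> Y. The coefficient
  of \<tau> in P(Z) is sgn \<tau> if Z \<subseteq> W and 0 otherwise, so the coefficient of \<tau> in the alternating
  sum is sgn \<tau> times the alternating sum over the subsets of W, which vanishes unless W = {}.
  Since \<tau> is injective and X is finite, W = {} means exactly \<tau>(X) = X.\<close>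

lemma sum_Pow_neg_one_power_card:
  assumes "finite W"
  shows "(\<Sum>Z\<in>Pow W. (-1) ^ card Z :: 'c::comm_ring_1) = (if W = {} then 1 else 0)"
proof -
  have "(\<Prod>x\<in>W. (1::'c) - 1) = (\<Sum>Z\<in>Pow W. (-1) ^ card Z * (\<Prod>x\<in>Z. 1) * (\<Prod>x\<in>W-Z. 1))"
    using assms by (rule prod_diff_conv_sum)
  then have "(\<Sum>Z\<in>Pow W. (-1) ^ card Z :: 'c) = 0 ^ card W"
    by simp
  moreover have "card W \<noteq> 0" if "W \<noteq> {}"
    using assms that by simp
  ultimately show ?thesis
    by (simp add: zero_power)
qed

lemma sum_Pow_subset_neg_one_power_card:
  assumes "finite X"
  shows "(\<Sum>Z\<in>Pow X. if Z \<subseteq> W then (-1) ^ card Z else 0 :: 'c::comm_ring_1)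
         = (if X \<inter> W = {} then 1 else 0)"
proof -
  have "(\<Sum>Z\<in>Pow X. if Z \<subseteq> W then (-1) ^ card Z else 0 :: 'c)
        = (\<Sum>Z\<in>{Z \<in> Pow X. Z \<subseteq> W}. (-1) ^ card Z)"
    by (rule sum.inter_filter[symmetric]) (simp add: assms)
  also have "{Z \<in> Pow X. Z \<subseteq> W} = Pow (X \<inter> W)"
    by auto
  also have "(\<Sum>Z\<in>Pow (X \<inter> W). (-1) ^ card Z :: 'c) = (if X \<inter> W = {} then 1 else 0)"
    using assms by (intro sum_Pow_neg_one_power_card) simp
  finally show ?thesis .
qed

lemma P_elt_permutes:
  assumes "\<tau> permutes (X \<union> Y)"
  shows "P_elt X Y Z \<tau> = (if Z \<subseteq> {x. \<tau> x \<in> Y} then of_int (sign \<tau>) else 0)"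
  using assms by (auto simp: P_elt_def signed_sum_def)

lemma permutes_image_eq_iff:
  assumes "\<tau> permutes (X \<union> Y)" "finite X" "X \<inter> Y = {}"
  shows "\<tau> ` X = X \<longleftrightarrow> X \<inter> {x. \<tau> x \<in> Y} = {}"
proof
  assume "X \<inter> {x. \<tau> x \<in> Y} = {}"
  moreover have "\<tau> ` X \<subseteq> X \<union> Y"
    using permutes_image[OF assms(1)] by auto
  ultimately have "\<tau> ` X \<subseteq> X"
    by blast
  moreover have "inj_on \<tau> X"
    using permutes_inj[OF assms(1)] by (rule inj_on_subset) simp
  ultimately show "\<tau> ` X = X"
    using assms(2) endo_inj_surj by blast
qed (use assms(3) in auto)

theorem proposition2p37:
  fixes X Y :: "'a set" and n :: nat
  assumes "finite X" "finite Y" "X \<inter> Y = {}" "card X = n" "card Y = n"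
  shows "(\<lambda>\<tau>. \<Sum>Z\<in>Pow X. (-1) ^ card Z * (P_elt X Y Z \<tau> :: 'c::comm_ring_1))
         = signed_sum {\<sigma>. \<sigma> permutes (X \<union> Y) \<and> \<sigma> ` X = X}"
proof
  fix \<tau> :: "'a \<Rightarrow> 'a"
  show "(\<Sum>Z\<in>Pow X. (-1) ^ card Z * (P_elt X Y Z \<tau> :: 'c))
         = signed_sum {\<sigma>. \<sigma> permutes (X \<union> Y) \<and> \<sigma> ` X = X} \<tau>"
  proof (cases "\<tau> permutes (X \<union> Y)")
    case False
    then show ?thesis
      by (simp add: P_elt_def signed_sum_def)
  next
    case True
    have "(\<Sum>Z\<in>Pow X. (-1) ^ card Z * (P_elt X Y Z \<tau> :: 'c))
          = (\<Sum>Z\<in>Pow X. if Z \<subseteq> {x. \<tau> x \<in> Y} then (-1) ^ card Z else 0) * of_int (sign \<tau>)"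
      by (auto simp: P_elt_permutes[OF True] sum_distrib_right intro: sum.cong)
    also have "\<dots> = (if X \<inter> {x. \<tau> x \<in> Y} = {} then of_int (sign \<tau>) else 0)"
      using assms(1) by (simp add: sum_Pow_subset_neg_one_power_card)
    also have "\<dots> = signed_sum {\<sigma>. \<sigma> permutes (X \<union> Y) \<and> \<sigma> ` X = X} \<tau>"
      using permutes_image_eq_iff[OF True assms(1,3)] True by (simp add: signed_sum_def)
    finally show ?thesis .
  qed
qed

end
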